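(* Let $a,b$ be positive integers and $h(j)=aj+b$ for $j\ge0$, $h(j)=0$ for $j<0$. Then $$\operatorname{hdepth}(h)=\begin{cases}1,& a<b,\\ 2,& b\le a<2b,\\ 3,& 2b\le a<3b,\\ 4,& 3b\le a\le 4b,\\ 3,& a>4b.\end{cases}$$
   Context: For a nonzero function $h:\mathbb Z\to\mathbb Z_{\ge 0}$ with $h(j)=0$ for all sufficiently negative $j$, and integers $k\le d$, set $\beta_k^d(h)=\sum_{j\le k}(-1)^{k-j}\binom{d-j}{k-j}h(j)$, and $\operatorname{hdepth}(h)=\max\{d\in\mathbb Z:\ \beta_k^d(h)\ge 0\text{ for all integers }k\le d\}$. *)

theory Defs
  imports Main
begin

text \<open>The sum is taken over the (finite, for the h considered) set of j <= k with h j nonzero;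
  terms with h j = 0 contribute nothing.\<close>
definition beta :: "int \<Rightarrow> int \<Rightarrow> (int \<Rightarrow> int) \<Rightarrow> int" where
  "beta k d h = (\<Sum>j \<in> {j. j \<le> k \<and> h j \<noteq> 0}.
      (-1) ^ nat (k - j) * int (nat (d - j) choose nat (k - j)) * h j)"

definition hdepth :: "(int \<Rightarrow> int) \<Rightarrow> int" where
  "hdepth h = (GREATEST d::int. \<forall>k. k \<le> d \<longrightarrow> beta k d h \<ge> 0)"

end

theory Submission
  imports Defs
begin

text \<open>For h(j) = a j + b the value \<beta>_1^d = a - (d - 1) b forces d \<le> 1 + a / b, and once
  a \<ge> (d - 1) b the quadratic 2 \<beta>_2^d is negative for every d \<ge> 5; so the depth is at most 4.
  For d \<le> 4 the finitely many \<beta>_k^d are explicit linear forms in a and b, and their signs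
  give the table.\<close>

definition affine_hilbert_fun :: "int \<Rightarrow> int \<Rightarrow> int \<Rightarrow> int" where
  "affine_hilbert_fun a b j = (if j \<ge> 0 then a * j + b else 0)"

lemma beta_neg_index:
  assumes "\<And>j. j < 0 \<Longrightarrow> h j = 0" and "k < 0"
  shows "beta k d h = 0"
proof -
  have "{j. j \<le> k \<and> h j \<noteq> 0} = {}" using assms by fastforce
  then show ?thesis unfolding beta_def by simp
qed

lemma beta_eq_sum_atLeastAtMost:
  assumes "\<And>j. j < 0 \<Longrightarrow> h j = 0" and "0 \<le> k"
  shows "beta k d h = (\<Sum>j = 0..k. (-1) ^ nat (k - j) * int (nat (d - j) choose nat (k - j)) * h j)"
  unfolding beta_def
proof (rule sum.mono_neutral_left)
  show "{j. j \<le> k \<and> h j \<noteq> 0} \<subseteq> {0..k}"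
    using assms(1) by (force simp: not_less[symmetric])
qed auto

lemma int_choose_two: "2 * int (n choose 2) = int n * (int n - 1)"
proof -
  have "even (n * (n - 1))" by (cases "even n") auto
  then have "2 * (n choose 2) = n * (n - 1)" by (simp add: choose_two)
  then have "int (2 * (n choose 2)) = int (n * (n - 1))" by simp
  then show ?thesis by (cases n) (auto simp: algebra_simps)
qed

lemma affine_hilbert_fun_neg: "j < 0 \<Longrightarrow> affine_hilbert_fun a b j = 0"
  by (simp add: affine_hilbert_fun_def)

lemma beta_affine_neg: "k < 0 \<Longrightarrow> beta k d (affine_hilbert_fun a b) = 0"
  by (rule beta_neg_index[OF affine_hilbert_fun_neg])

lemmas beta_affine_eq_sum = beta_eq_sum_atLeastAtMost[OF affine_hilbert_fun_neg]

lemma beta_affine_0: "beta 0 d (affine_hilbert_fun a b) = b"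
  by (simp add: beta_affine_eq_sum affine_hilbert_fun_def)

lemma beta_affine_1:
  assumes "1 \<le> d"
  shows "beta 1 d (affine_hilbert_fun a b) = a + b - d * b"
proof -
  have "{0..1::int} = {0, 1}" by auto
  moreover have "int (nat d choose 1) = d" using assms by simp
  ultimately show ?thesis
    by (simp add: beta_affine_eq_sum affine_hilbert_fun_def algebra_simps)
qed

lemma beta_affine_2:
  assumes "2 \<le> d"
  shows "2 * beta 2 d (affine_hilbert_fun a b) =
    d * (d - 1) * b - 2 * (d - 1) * (a + b) + 2 * (2 * a + b)"
proof -
  have "{0..2::int} = {0, 1, 2}" by auto
  then have "beta 2 d (affine_hilbert_fun a b)
      = int (nat d choose 2) * b - int (nat (d - 1) choose 1) * (a + b) + (2 * a + b)"
    by (simp add: beta_affine_eq_sum affine_hilbert_fun_def algebra_simps numeral_eq_Suc)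
  moreover have "2 * int (nat d choose 2) * b = d * (d - 1) * b"
    using int_choose_two[of "nat d"] assms by simp
  moreover have "int (nat (d - 1) choose 1) = d - 1" using assms by simp
  ultimately show ?thesis by (simp add: algebra_simps)
qed

lemma beta_affine_3:
  "beta 3 3 (affine_hilbert_fun a b) = 2 * a"
  "beta 3 4 (affine_hilbert_fun a b) = 2 * a - 2 * b"
proof -
  have "{0..3::int} = {0, 1, 2, 3}" by auto
  then show "beta 3 3 (affine_hilbert_fun a b) = 2 * a"
    "beta 3 4 (affine_hilbert_fun a b) = 2 * a - 2 * b"
    by (simp_all add: beta_affine_eq_sum affine_hilbert_fun_def algebra_simps numeral_eq_Suc)
qed

lemma beta_affine_4_4: "beta 4 4 (affine_hilbert_fun a b) = 2 * a + b"
proof -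
  have "{0..4::int} = {0, 1, 2, 3, 4}" by auto
  then show ?thesis
    by (simp add: beta_affine_eq_sum affine_hilbert_fun_def algebra_simps numeral_eq_Suc)
qed

lemma beta_affine_1_or_2_neg:
  assumes "0 < b" and "5 \<le> d"
  shows "beta 1 d (affine_hilbert_fun a b) < 0 \<or> beta 2 d (affine_hilbert_fun a b) < 0"
proof (cases "a < (d - 1) * b")
  case True
  then show ?thesis using assms by (simp add: beta_affine_1 algebra_simps)
next
  case False
  \<comment> \<open>With a \<ge> (d - 1) b, 2 beta 2 d \<le> ((d - 1)(4 - d) + 2) b, which is negative for d \<ge> 5.\<close>
  have "(d - 1) * b * (d - 3) \<le> a * (d - 3)"
    using False assms by (intro mult_right_mono) auto
  moreover have "5 * d \<le> d * d" using assms(2) by (intro mult_right_mono) auto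
  then have "0 < b * (d * d - 5 * d + 2)" using assms(1) by simp
  ultimately have "2 * beta 2 d (affine_hilbert_fun a b) < 0"
    using assms(2) by (simp add: beta_affine_2 algebra_simps)
  then show ?thesis by simp
qed

lemma beta_affine_nonneg_iff:
  assumes "0 \<le> a" and "0 < b"
  shows "(\<forall>k \<le> d. 0 \<le> beta k d (affine_hilbert_fun a b)) \<longleftrightarrow>
    d \<le> 1 \<or> (d = 2 \<and> b \<le> a) \<or> (d = 3 \<and> 2 * b \<le> a) \<or> (d = 4 \<and> 3 * b \<le> a \<and> a \<le> 4 * b)"
    (is "?nonneg \<longleftrightarrow> ?cond")
proof
  assume ?nonneg
  show ?cond
  proof (cases "d \<le> 1")
    case False
    have nonneg_1_2: "0 \<le> beta 1 d (affine_hilbert_fun a b)" "0 \<le> beta 2 d (affine_hilbert_fun a b)"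
      using \<open>?nonneg\<close> False by simp_all
    then have beta_1: "0 \<le> a + b - d * b"
      and beta_2: "0 \<le> d * (d - 1) * b - 2 * (d - 1) * (a + b) + 2 * (2 * a + b)"
      using False beta_affine_1[of d a b] beta_affine_2[of d a b] by simp_all
    have "d \<le> 4"
    proof (rule ccontr)
      assume "\<not> d \<le> 4"
      then show False using beta_affine_1_or_2_neg[OF assms(2), of d a] nonneg_1_2 by linarith
    qed
    with False have "d = 2 \<or> d = 3 \<or> d = 4" by linarith
    then show ?thesis using beta_1 beta_2 by auto
  qed simp
next
  assume ?cond
  show ?nonneg
  proof (intro allI impI)
    fix k assume "k \<le> d"
    with \<open>?cond\<close> consider "k < 0" | "k = 0" | "k = 1" "1 \<le> d" | "k = 2" "2 \<le> d" | "k = 3" | "k = 4"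
      by fastforce
    then show "0 \<le> beta k d (affine_hilbert_fun a b)"
    proof cases
      case 4
      then have "0 \<le> 2 * beta k d (affine_hilbert_fun a b)"
        using \<open>?cond\<close> assms beta_affine_2[of d a b] by auto
      then show ?thesis by simp
    qed (use \<open>?cond\<close> \<open>k \<le> d\<close> assms in
        \<open>auto simp: beta_affine_neg beta_affine_0 beta_affine_1 beta_affine_3 beta_affine_4_4\<close>)
  qed
qed

theorem theorem3p5:
  fixes a b :: int
  assumes "a > 0" and "b > 0"
  shows "hdepth (\<lambda>j. if j \<ge> 0 then a * j + b else 0) =
    (if a < b then 1
     else if a < 2 * b then 2
     else if a < 3 * b then 3
     else if a \<le> 4 * b then 4
     else 3)"
proof -
  have "hdepth (affine_hilbert_fun a b) = (GREATEST d. d \<le> 1 \<or> (d = 2 \<and> b \<le> a) \<or>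
      (d = 3 \<and> 2 * b \<le> a) \<or> (d = 4 \<and> 3 * b \<le> a \<and> a \<le> 4 * b))"
    unfolding hdepth_def using beta_affine_nonneg_iff[of a b] assms by simp
  also have "\<dots> = (if a < b then 1 else if a < 2 * b then 2 else if a < 3 * b then 3
      else if a \<le> 4 * b then 4 else 3)"
    using assms by (intro Greatest_equality) (auto split: if_splits)
  finally show ?thesis by (simp add: affine_hilbert_fun_def[abs_def])
qed

end
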